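(* Let $W\subset\mathbb{P}^4$ be a singular cubic hypersurface and suppose $p$ is an ordinary double point of $W$. Then $\mathbb{P}^4\setminus W$ contains a cylinder, i.e. a Zariski open subset isomorphic to $Z\times\mathbb{A}^1$ for some variety $Z$.
   Context: Over $\mathbb{C}$. *)

theory Defs
  imports "HOL-Analysis.Analysis"
begin

text \<open>Points of complex affine n-space are represented as functions nat => complex
  vanishing outside the coordinates 0..n-1.\<close>

definition cspace :: "nat \<Rightarrow> (nat \<Rightarrow> complex) set" where
  "cspace n = {x. \<forall>i\<ge>n. x i = 0}"

definition smul :: "complex \<Rightarrow> (nat \<Rightarrow> complex) \<Rightarrow> (nat \<Rightarrow> complex)" where
  "smul c x = (\<lambda>i. c * x i)"

inductive_set polyfun :: "nat \<Rightarrow> ((nat \<Rightarrow> complex) \<Rightarrow> complex) set" for n :: nat where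
  pf_const: "(\<lambda>x. c) \<in> polyfun n"
| pf_var: "i < n \<Longrightarrow> (\<lambda>x. x i) \<in> polyfun n"
| pf_add: "f \<in> polyfun n \<Longrightarrow> g \<in> polyfun n \<Longrightarrow> (\<lambda>x. f x + g x) \<in> polyfun n"
| pf_mult: "f \<in> polyfun n \<Longrightarrow> g \<in> polyfun n \<Longrightarrow> (\<lambda>x. f x * g x) \<in> polyfun n"

definition homogeneous_of_degree ::
  "nat \<Rightarrow> nat \<Rightarrow> ((nat \<Rightarrow> complex) \<Rightarrow> complex) \<Rightarrow> bool" where
  "homogeneous_of_degree n d f \<longleftrightarrow> f \<in> polyfun n \<and> (\<forall>c x. f (smul c x) = c ^ d * f x)"

definition pdiff :: "nat \<Rightarrow> ((nat \<Rightarrow> complex) \<Rightarrow> complex) \<Rightarrow> (nat \<Rightarrow> complex) \<Rightarrow> complex" where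
  "pdiff i f = (\<lambda>x. deriv (\<lambda>t. f (x(i := t))) (x i))"

text \<open>Projective n-space: nonzero vectors of C^(n+1) (subsets are cones).\<close>

definition proj_space :: "nat \<Rightarrow> (nat \<Rightarrow> complex) set" where
  "proj_space n = cspace (Suc n) - {\<lambda>i. 0}"

definition proj_eq :: "(nat \<Rightarrow> complex) \<Rightarrow> (nat \<Rightarrow> complex) \<Rightarrow> bool" where
  "proj_eq x y \<longleftrightarrow> (\<exists>c. c \<noteq> 0 \<and> y = smul c x)"

definition proj_closed :: "nat \<Rightarrow> (nat \<Rightarrow> complex) set \<Rightarrow> bool" where
  "proj_closed n S \<longleftrightarrow> (\<exists>G. (\<forall>g\<in>G. \<exists>d. homogeneous_of_degree (Suc n) d g) \<and>
      S = {x \<in> proj_space n. \<forall>g\<in>G. g x = 0})"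

definition proj_open :: "nat \<Rightarrow> (nat \<Rightarrow> complex) set \<Rightarrow> bool" where
  "proj_open n U \<longleftrightarrow> U \<subseteq> proj_space n \<and> proj_closed n (proj_space n - U)"

text \<open>Ordinary double point of the hypersurface F = 0 in P^n: a singular point at which
  the Hessian of F has corank one (its kernel is the line spanned by p), i.e. the tangent
  cone is a nondegenerate quadric cone.\<close>

definition ordinary_double_point ::
  "nat \<Rightarrow> ((nat \<Rightarrow> complex) \<Rightarrow> complex) \<Rightarrow> (nat \<Rightarrow> complex) \<Rightarrow> bool" where
  "ordinary_double_point n F p \<longleftrightarrow>
     p \<in> proj_space n \<and> F p = 0 \<and> (\<forall>i\<le>n. pdiff i F p = 0) \<and>
     {v \<in> cspace (Suc n). \<forall>i\<le>n. (\<Sum>j\<le>n. pdiff j (pdiff i F) p * v j) = 0}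
       = {smul c p | c. True}"

definition aff_closed :: "nat \<Rightarrow> (nat \<Rightarrow> complex) set \<Rightarrow> bool" where
  "aff_closed m S \<longleftrightarrow> (\<exists>G \<subseteq> polyfun m. S = {x \<in> cspace m. \<forall>g\<in>G. g x = 0})"

definition aff_open :: "nat \<Rightarrow> (nat \<Rightarrow> complex) set \<Rightarrow> bool" where
  "aff_open m V \<longleftrightarrow> V \<subseteq> cspace m \<and> aff_closed m (cspace m - V)"

definition quasi_affine_variety :: "nat \<Rightarrow> (nat \<Rightarrow> complex) set \<Rightarrow> bool" where
  "quasi_affine_variety m Z \<longleftrightarrow>
     (\<exists>A V. aff_closed m A \<and> aff_open m V \<and> Z = A \<inter> V) \<and> Z \<noteq> {} \<and>
     (\<forall>C1 C2. aff_closed m C1 \<and> aff_closed m C2 \<and> Z \<subseteq> C1 \<union> C2 \<longrightarrow> Z \<subseteq> C1 \<or> Z \<subseteq> C2)"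

text \<open>Z x A^1 inside C^(m+1), the last coordinate being the A^1 factor.\<close>

definition cylinder_over :: "nat \<Rightarrow> (nat \<Rightarrow> complex) set \<Rightarrow> (nat \<Rightarrow> complex) set" where
  "cylinder_over m Z = {z(m := t) | z t. z \<in> Z}"

definition regular_on_proj ::
  "nat \<Rightarrow> (nat \<Rightarrow> complex) set \<Rightarrow> ((nat \<Rightarrow> complex) \<Rightarrow> complex) \<Rightarrow> bool" where
  "regular_on_proj n U f \<longleftrightarrow>
     (\<forall>x\<in>U. \<exists>a b d W. homogeneous_of_degree (Suc n) d a \<and> homogeneous_of_degree (Suc n) d b \<and>
        proj_open n W \<and> x \<in> W \<and> (\<forall>y\<in>U \<inter> W. b y \<noteq> 0 \<and> f y = a y / b y))"

definition morphism_proj_to_aff ::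
  "nat \<Rightarrow> (nat \<Rightarrow> complex) set \<Rightarrow> nat \<Rightarrow> ((nat \<Rightarrow> complex) \<Rightarrow> (nat \<Rightarrow> complex)) \<Rightarrow> bool" where
  "morphism_proj_to_aff n U m \<phi> \<longleftrightarrow>
     (\<forall>x\<in>U. \<phi> x \<in> cspace m) \<and> (\<forall>k<m. regular_on_proj n U (\<lambda>x. \<phi> x k))"

definition morphism_aff_to_proj ::
  "nat \<Rightarrow> (nat \<Rightarrow> complex) set \<Rightarrow> nat \<Rightarrow> ((nat \<Rightarrow> complex) \<Rightarrow> (nat \<Rightarrow> complex)) \<Rightarrow> bool" where
  "morphism_aff_to_proj m C n \<psi> \<longleftrightarrow>
     (\<forall>z\<in>C. \<exists>V h. aff_open m V \<and> z \<in> V \<and> (\<forall>i\<le>n. h i \<in> polyfun m) \<and>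
        (\<forall>y\<in>C \<inter> V. (\<exists>i\<le>n. h i y \<noteq> 0) \<and>
            (\<exists>c. c \<noteq> 0 \<and> \<psi> y = smul c (\<lambda>i. if i \<le> n then h i y else 0))))"

definition contains_cylinder :: "nat \<Rightarrow> (nat \<Rightarrow> complex) set \<Rightarrow> bool" where
  "contains_cylinder n X \<longleftrightarrow>
     (\<exists>U m Z \<phi> \<psi>. proj_open n U \<and> U \<subseteq> X \<and> quasi_affine_variety m Z \<and>
        morphism_proj_to_aff n U (Suc m) \<phi> \<and>
        morphism_aff_to_proj (Suc m) (cylinder_over m Z) n \<psi> \<and>
        (\<forall>x\<in>U. \<phi> x \<in> cylinder_over m Z) \<and>
        (\<forall>y\<in>cylinder_over m Z. \<psi> y \<in> U) \<and>
        (\<forall>x\<in>U. proj_eq x (\<psi> (\<phi> x))) \<and>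
        (\<forall>y\<in>cylinder_over m Z. \<phi> (\<psi> y) = y))"

end

theory Submission
  imports Defs "HOL-Computational_Algebra.Polynomial"
begin

text \<open>Let Q be the quadratic part of the cubic F at the double point p. As F is singular at p,
  F (v + t p) = t Q v + F v, so Q is a quadric cone with vertex p, of rank four because p is an
  ordinary double point. Pick an isotropic vector e of Q off the vertex line; then
  Q (v + t e) = Q v + t ell v for a linear form ell vanishing at p and e. On the open set
  U = {ell Q F \<noteq> 0} the map sending x to Q x / ell x ^ 2, F x / ell x ^ 3 and two coordinates of
  the projection of x / ell x along the plane spanned by p and e is an isomorphism onto
  C* \<times> C* \<times> A^2: its inverse recovers the projection from the hyperplane ell = 1, then the
  e-component from Q, which is affine along e, and finally the p-component from F, which is affine
  along p with slope Q x \<noteq> 0.\<close>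

section \<open>Polynomial functions and partial derivatives\<close>

lemma polyfun_cmult: "f \<in> polyfun n \<Longrightarrow> (\<lambda>x. c * f x) \<in> polyfun n"
  by (intro polyfun.pf_mult polyfun.pf_const)

lemma polyfun_diff: "f \<in> polyfun n \<Longrightarrow> g \<in> polyfun n \<Longrightarrow> (\<lambda>x. f x - g x) \<in> polyfun n"
  using polyfun.pf_add[OF _ polyfun_cmult[of g n "-1"]] by simp

lemma polyfun_divide: "f \<in> polyfun n \<Longrightarrow> (\<lambda>x. f x / c) \<in> polyfun n"
  using polyfun_cmult[of f n "inverse c"] by (simp add: field_simps)

lemma polyfun_sum:
  "finite A \<Longrightarrow> (\<And>a. a \<in> A \<Longrightarrow> f a \<in> polyfun n) \<Longrightarrow> (\<lambda>x. \<Sum>a\<in>A. f a x) \<in> polyfun n"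
  by (induction A rule: finite_induct) (auto intro: polyfun.intros)

lemma polyfun_power: "f \<in> polyfun n \<Longrightarrow> (\<lambda>x. f x ^ k) \<in> polyfun n"
  by (induction k) (auto intro: polyfun.intros)

lemma polyfun_compose:
  assumes "f \<in> polyfun n" and "\<And>i. i < n \<Longrightarrow> (\<lambda>y. X y i) \<in> polyfun m"
  shows "(\<lambda>y. f (X y)) \<in> polyfun m"
  using assms by induction (auto intro: polyfun.intros)

lemma polyfun_along_line:
  "f \<in> polyfun n \<Longrightarrow> \<exists>P. \<forall>t. f (\<lambda>k. x k + t * v k) = poly P t"
proof (induction rule: polyfun.induct)
  case (pf_const c)
  show ?case by (rule exI[of _ "[:c:]"]) simp
next
  case (pf_var i)
  show ?case by (rule exI[of _ "[:x i, v i:]"]) (simp add: algebra_simps)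
next
  case (pf_add f g)
  then obtain P Q where "\<forall>t. f (\<lambda>k. x k + t * v k) = poly P t" "\<forall>t. g (\<lambda>k. x k + t * v k) = poly Q t"
    by blast
  then show ?case by (intro exI[of _ "P + Q"]) simp
next
  case (pf_mult f g)
  then obtain P Q where "\<forall>t. f (\<lambda>k. x k + t * v k) = poly P t" "\<forall>t. g (\<lambda>k. x k + t * v k) = poly Q t"
    by blast
  then show ?case by (intro exI[of _ "P * Q"]) simp
qed

lemma polyfun_has_partial_derivative:
  "f \<in> polyfun n \<Longrightarrow>
     \<exists>g\<in>polyfun n. \<forall>x. ((\<lambda>t. f (x(a := t))) has_field_derivative g x) (at (x a))"
proof (induction rule: polyfun.induct)
  case (pf_const c)
  show ?case by (intro bexI[of _ "\<lambda>x. 0"] polyfun.pf_const) auto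
next
  case (pf_var i)
  show ?case
    by (intro bexI[of _ "\<lambda>x. if i = a then 1 else 0"] allI)
      (auto intro: polyfun.pf_const intro!: derivative_eq_intros)
next
  case (pf_add f g)
  then obtain f' g' where "f' \<in> polyfun n" "g' \<in> polyfun n"
    "\<forall>x. ((\<lambda>t. f (x(a := t))) has_field_derivative f' x) (at (x a))"
    "\<forall>x. ((\<lambda>t. g (x(a := t))) has_field_derivative g' x) (at (x a))"
    by blast
  then show ?case
    by (intro bexI[of _ "\<lambda>x. f' x + g' x"] allI DERIV_add) (blast intro: polyfun.intros)+
next
  case (pf_mult f g)
  then obtain f' g' where "f' \<in> polyfun n" "g' \<in> polyfun n"
    "\<forall>x. ((\<lambda>t. f (x(a := t))) has_field_derivative f' x) (at (x a))"
    "\<forall>x. ((\<lambda>t. g (x(a := t))) has_field_derivative g' x) (at (x a))"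
    by blast
  note hyps = this
  show ?case
  proof (intro bexI[of _ "\<lambda>x. f' x * g x + f x * g' x"] allI)
    fix x
    show "((\<lambda>t. f (x(a := t)) * g (x(a := t))) has_field_derivative f' x * g x + f x * g' x) (at (x a))"
      using DERIV_mult[of "\<lambda>t. f (x(a := t))" "f' x" "x a" UNIV "\<lambda>t. g (x(a := t))" "g' x"] hyps
      by (simp add: mult.commute)
  qed (use pf_mult.hyps hyps in \<open>auto intro: polyfun.intros\<close>)
qed

lemma
  assumes "f \<in> polyfun n"
  shows polyfun_pdiff: "pdiff a f \<in> polyfun n"
    and has_field_derivative_pdiff:
      "((\<lambda>t. f (x(a := t))) has_field_derivative pdiff a f x) (at (x a))"
proof -
  obtain g where g: "g \<in> polyfun n" "\<And>x. ((\<lambda>t. f (x(a := t))) has_field_derivative g x) (at (x a))"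
    using polyfun_has_partial_derivative[OF assms] by blast
  then have "pdiff a f = g"
    unfolding pdiff_def by (auto intro!: ext DERIV_imp_deriv)
  with g show "pdiff a f \<in> polyfun n" "((\<lambda>t. f (x(a := t))) has_field_derivative pdiff a f x) (at (x a))"
    by simp_all
qed

lemma pdiff_const [simp]: "pdiff a (\<lambda>x. c) = (\<lambda>x. 0)"
  unfolding pdiff_def by simp

lemma pdiff_var: "pdiff a (\<lambda>x. x i) = (\<lambda>x. if i = a then 1 else 0)"
  unfolding pdiff_def by (auto intro!: ext DERIV_imp_deriv derivative_eq_intros)

lemma pdiff_add:
  assumes "f \<in> polyfun n" "g \<in> polyfun n"
  shows "pdiff a (\<lambda>x. f x + g x) = (\<lambda>x. pdiff a f x + pdiff a g x)"
  unfolding pdiff_def[of a "\<lambda>x. f x + g x"]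
  by (intro ext DERIV_imp_deriv DERIV_add has_field_derivative_pdiff[OF assms(1)]
      has_field_derivative_pdiff[OF assms(2)])

lemma pdiff_mult:
  assumes "f \<in> polyfun n" "g \<in> polyfun n"
  shows "pdiff a (\<lambda>x. f x * g x) = (\<lambda>x. pdiff a f x * g x + f x * pdiff a g x)"
  unfolding pdiff_def[of a "\<lambda>x. f x * g x"]
proof (intro ext DERIV_imp_deriv)
  fix x
  show "((\<lambda>t. f (x(a := t)) * g (x(a := t))) has_field_derivative
      pdiff a f x * g x + f x * pdiff a g x) (at (x a))"
    using DERIV_mult[OF has_field_derivative_pdiff[OF assms(1), of x a]
        has_field_derivative_pdiff[OF assms(2), of x a]]
    by (simp add: mult.commute)
qed

lemma pdiff_commute: "f \<in> polyfun n \<Longrightarrow> pdiff a (pdiff b f) = pdiff b (pdiff a f)"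
proof (induction rule: polyfun.induct)
  case (pf_const c)
  show ?case by simp
next
  case (pf_var i)
  show ?case by (simp add: pdiff_var)
next
  case (pf_add f g)
  then show ?case
    by (simp add: pdiff_add[OF pf_add.hyps]
        pdiff_add[OF polyfun_pdiff[OF pf_add.hyps(1)] polyfun_pdiff[OF pf_add.hyps(2)]])
next
  case (pf_mult f g)
  note f = pf_mult.hyps(1) and g = pf_mult.hyps(2)
  note f' = polyfun_pdiff[OF f] and g' = polyfun_pdiff[OF g]
  have prods: "(\<lambda>x. pdiff b f x * g x) \<in> polyfun n" "(\<lambda>x. f x * pdiff b g x) \<in> polyfun n"
    "(\<lambda>x. pdiff a f x * g x) \<in> polyfun n" "(\<lambda>x. f x * pdiff a g x) \<in> polyfun n"
    using f g f' g' by (auto intro: polyfun.pf_mult)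
  show ?case
    unfolding pdiff_mult[OF f g] pdiff_add[OF prods(1,2)] pdiff_add[OF prods(3,4)]
      pdiff_mult[OF f' g] pdiff_mult[OF f g'] pf_mult.IH
    by (simp add: algebra_simps)
qed

lemma has_field_derivative_along_line:
  "f \<in> polyfun n \<Longrightarrow>
     ((\<lambda>t. f (\<lambda>k. x k + t * v k)) has_field_derivative
        (\<Sum>a<n. pdiff a f (\<lambda>k. x k + t * v k) * v a)) (at t)"
proof (induction arbitrary: t rule: polyfun.induct)
  case (pf_const c)
  show ?case by simp
next
  case (pf_var i)
  have "(\<Sum>a<n. (if i = a then 1 else 0) * v a) = (\<Sum>a<n. if a = i then v a else 0)"
    by (intro sum.cong) auto
  with pf_var have "(\<Sum>a<n. (if i = a then 1 else 0) * v a) = v i"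
    by simp
  then show ?case by (auto simp: pdiff_var intro!: derivative_eq_intros)
next
  case (pf_add f g)
  then show ?case
    by (auto simp: pdiff_add sum.distrib algebra_simps intro!: derivative_eq_intros)
next
  case (pf_mult f g)
  then show ?case
    by (auto simp: pdiff_mult sum.distrib sum_distrib_left sum_distrib_right algebra_simps
        intro!: derivative_eq_intros)
qed

section \<open>Homogeneous polynomials and the cubic at a double point\<close>

lemma homogeneous_of_degree_polyfun: "homogeneous_of_degree n d f \<Longrightarrow> f \<in> polyfun n"
  unfolding homogeneous_of_degree_def by simp

lemma homogeneous_of_degree_mult:
  "homogeneous_of_degree n d f \<Longrightarrow> homogeneous_of_degree n e g \<Longrightarrow>
     homogeneous_of_degree n (d + e) (\<lambda>x. f x * g x)"
  unfolding homogeneous_of_degree_def by (auto intro: polyfun.pf_mult simp: power_add)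

lemma homogeneous_of_degree_power:
  "homogeneous_of_degree n d f \<Longrightarrow> homogeneous_of_degree n (d * k) (\<lambda>x. f x ^ k)"
  unfolding homogeneous_of_degree_def
  by (auto intro: polyfun_power simp: power_mult_distrib power_mult)

lemma poly_eqI_nonzero:
  fixes A B :: "'a::{idom, ring_char_0} poly"
  assumes "\<And>t. t \<noteq> 0 \<Longrightarrow> poly A t = poly B t"
  shows "A = B"
proof (rule ccontr)
  assume "A \<noteq> B"
  then have "finite {t. poly (A - B) t = 0}"
    by (intro poly_roots_finite) simp
  moreover have "UNIV - {0} \<subseteq> {t. poly (A - B) t = 0}"
    using assms by auto
  ultimately have "finite (UNIV - {0 :: 'a})"
    by (rule rev_finite_subset)
  then show False
    by (simp add: infinite_UNIV_char_0)
qed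

lemma degree_le_if_poly_eq_reflected:
  fixes P R :: "complex poly"
  assumes "\<And>t. t \<noteq> 0 \<Longrightarrow> poly P t = t ^ d * poly R (inverse t)"
  shows "degree R \<le> d"
proof (rule ccontr)
  assume "\<not> degree R \<le> d"
  then have less: "d < degree R" by simp
  have "monom 1 (degree R) * P = monom 1 d * reflect_poly R"
  proof (rule poly_eqI_nonzero)
    fix t :: complex
    assume "t \<noteq> 0"
    then have "poly (monom 1 (degree R) * P) t = t ^ d * (t ^ degree R * poly R (inverse t))"
      using assms by (simp add: poly_monom)
    also have "\<dots> = poly (monom 1 d * reflect_poly R) t"
      using \<open>t \<noteq> 0\<close> by (simp add: poly_monom poly_reflect_poly_nz)
    finally show "poly (monom 1 (degree R) * P) t = poly (monom 1 d * reflect_poly R) t" .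
  qed
  then have "coeff (monom 1 (degree R) * P) d = coeff (monom 1 d * reflect_poly R) d"
    by simp
  then have "lead_coeff R = 0"
    using less by (simp add: coeff_monom_mult coeff_reflect_poly)
  with less show False by simp
qed

lemma homogeneous_along_line:
  assumes "homogeneous_of_degree n d F"
  obtains P where "\<And>t. F (\<lambda>k. x k + t * v k) = poly P t" and "degree P \<le> d"
    and "\<And>s. s \<noteq> 0 \<Longrightarrow> F (\<lambda>k. v k + s * x k) = s ^ d * poly P (inverse s)"
proof -
  have F: "F \<in> polyfun n" "\<And>c y. F (smul c y) = c ^ d * F y"
    using assms unfolding homogeneous_of_degree_def by auto
  obtain P where P: "\<And>t. F (\<lambda>k. x k + t * v k) = poly P t"
    using polyfun_along_line[OF F(1)] by blast
  obtain R where R: "\<And>s. F (\<lambda>k. v k + s * x k) = poly R s"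
    using polyfun_along_line[OF F(1)] by blast
  have reflected: "F (\<lambda>k. v k + s * x k) = s ^ d * poly P (inverse s)" if "s \<noteq> 0" for s
  proof -
    have "(\<lambda>k. v k + s * x k) = smul s (\<lambda>k. x k + inverse s * v k)"
      using that by (auto simp: smul_def field_simps)
    then show ?thesis
      using F(2) P by simp
  qed
  have "degree P \<le> d"
    by (rule degree_le_if_poly_eq_reflected[of R]) (use R reflected in simp)
  with P reflected show ?thesis
    using that by blast
qed

definition hessian :: "((nat \<Rightarrow> complex) \<Rightarrow> complex) \<Rightarrow> (nat \<Rightarrow> complex) \<Rightarrow> nat \<Rightarrow> nat \<Rightarrow> complex"
  where "hessian F p a b = pdiff b (pdiff a F) p"

definition bilinear_form ::
  "nat \<Rightarrow> (nat \<Rightarrow> nat \<Rightarrow> complex) \<Rightarrow> (nat \<Rightarrow> complex) \<Rightarrow> (nat \<Rightarrow> complex) \<Rightarrow> complex"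
  where "bilinear_form n H x y = (\<Sum>a<n. \<Sum>b<n. H a b * x a * y b)"

lemma taylor_coefficients_along_line:
  assumes f: "f \<in> polyfun n" and P: "\<And>t. f (\<lambda>k. x k + t * v k) = poly P t"
  shows "coeff P 0 = f x" "coeff P 1 = (\<Sum>a<n. pdiff a f x * v a)"
    and "coeff P 2 = bilinear_form n (hessian f x) v v / 2"
proof -
  define line where "line t = (\<lambda>k. x k + t * v k)" for t
  have line0: "line 0 = x"
    by (simp add: line_def)
  have P_line: "poly P = (\<lambda>t. f (line t))"
    using P by (simp add: line_def)
  have D1: "poly (pderiv P) t = (\<Sum>a<n. pdiff a f (line t) * v a)" for t
  proof (rule DERIV_unique)
    show "(poly P has_field_derivative poly (pderiv P) t) (at t)"
      by (rule poly_DERIV)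
    show "(poly P has_field_derivative (\<Sum>a<n. pdiff a f (line t) * v a)) (at t)"
      unfolding P_line line_def by (rule has_field_derivative_along_line[OF f])
  qed
  have D2: "poly (pderiv (pderiv P)) 0 = bilinear_form n (hessian f x) v v"
  proof (rule DERIV_unique)
    show "(poly (pderiv P) has_field_derivative poly (pderiv (pderiv P)) 0) (at 0)"
      by (rule poly_DERIV)
    have "(poly (pderiv P) has_field_derivative
        (\<Sum>a<n. (\<Sum>b<n. pdiff b (pdiff a f) (line 0) * v b) * v a)) (at 0)"
      unfolding D1[abs_def] line_def
      by (intro DERIV_sum DERIV_cmult_right has_field_derivative_along_line polyfun_pdiff f)
    then show "(poly (pderiv P) has_field_derivative bilinear_form n (hessian f x) v v) (at 0)"
      by (simp add: line0 bilinear_form_def hessian_def sum_distrib_left mult_ac)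
  qed
  show "coeff P 0 = f x"
    using P[of 0] by (simp add: poly_0_coeff_0)
  show "coeff P 1 = (\<Sum>a<n. pdiff a f x * v a)"
    using D1[of 0] by (simp add: line0 poly_0_coeff_0 coeff_pderiv)
  show "coeff P 2 = bilinear_form n (hessian f x) v v / 2"
    using D2 by (simp add: poly_0_coeff_0 coeff_pderiv numeral_2_eq_2 mult.commute)
qed

text \<open>The cubic F (p + t v) has no constant or linear term, so F (v + s p) = s ^ 3 F (p + v / s)
  is affine in s.\<close>

lemma cubic_expansion_at_singular_point:
  assumes F: "homogeneous_of_degree n 3 F"
    and vanish: "F p = 0" and singular: "\<And>a. a < n \<Longrightarrow> pdiff a F p = 0"
  shows "F (\<lambda>k. v k + s * p k) = s * (bilinear_form n (hessian F p) v v / 2) + F v"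
proof -
  have Fpoly: "F \<in> polyfun n"
    using F by (rule homogeneous_of_degree_polyfun)
  obtain P where P: "\<And>t. F (\<lambda>k. p k + t * v k) = poly P t" and deg: "degree P \<le> 3"
    and reflected: "\<And>s. s \<noteq> 0 \<Longrightarrow> F (\<lambda>k. v k + s * p k) = s ^ 3 * poly P (inverse s)"
    using homogeneous_along_line[OF F] by blast
  note coeffs = taylor_coefficients_along_line[OF Fpoly P]
  have cubic: "poly P t = coeff P 2 * t ^ 2 + coeff P 3 * t ^ 3" for t
  proof -
    have "poly P t = (\<Sum>i\<le>3. coeff P i * t ^ i)"
      unfolding poly_altdef using deg by (intro sum.mono_neutral_left) (auto simp: coeff_eq_0)
    then show ?thesis
      using coeffs(1,2) vanish singular by (simp add: numeral_3_eq_3 numeral_2_eq_2)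
  qed
  obtain R where R: "\<And>s. F (\<lambda>k. v k + s * p k) = poly R s"
    using polyfun_along_line[OF Fpoly] by blast
  have "R = [:coeff P 3, coeff P 2:]"
  proof (rule poly_eqI_nonzero)
    fix s :: complex
    assume "s \<noteq> 0"
    then have "poly R s = s ^ 3 * poly P (inverse s)"
      using reflected R by metis
    also have "\<dots> = poly [:coeff P 3, coeff P 2:] s"
      using \<open>s \<noteq> 0\<close> unfolding cubic by (simp add: field_simps power2_eq_square power3_eq_cube)
    finally show "poly R s = poly [:coeff P 3, coeff P 2:] s" .
  qed
  then show ?thesis
    using R[of s] R[of 0] coeffs(3) by (simp add: algebra_simps)
qed

definition lin_form :: "nat \<Rightarrow> (nat \<Rightarrow> complex) \<Rightarrow> (nat \<Rightarrow> complex) \<Rightarrow> complex"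
  where "lin_form n c x = (\<Sum>m<n. c m * x m)"

definition mat_vec :: "nat \<Rightarrow> (nat \<Rightarrow> nat \<Rightarrow> complex) \<Rightarrow> (nat \<Rightarrow> complex) \<Rightarrow> nat \<Rightarrow> complex"
  where "mat_vec n H y a = (\<Sum>b<n. H a b * y b)"

lemma lin_form_add_scaled: "lin_form n c (\<lambda>m. x m + a * y m) = lin_form n c x + a * lin_form n c y"
  unfolding lin_form_def by (simp add: algebra_simps sum.distrib sum_distrib_left)

lemma lin_form_smul: "lin_form n c (smul a x) = a * lin_form n c x"
  unfolding lin_form_def smul_def by (simp add: sum_distrib_left mult_ac)

lemma homogeneous_lin_form: "homogeneous_of_degree n 1 (lin_form n c)"
proof -
  have "(\<lambda>x. \<Sum>m<n. c m * x m) \<in> polyfun n"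
    by (intro polyfun_sum polyfun_cmult polyfun.pf_var) auto
  then have "lin_form n c \<in> polyfun n"
    by (simp add: lin_form_def[abs_def])
  then show ?thesis
    unfolding homogeneous_of_degree_def using lin_form_smul by simp
qed

lemma mat_vec_smul: "mat_vec n H (smul a x) b = a * mat_vec n H x b"
  unfolding mat_vec_def smul_def by (simp add: sum_distrib_left mult_ac)

lemma bilinear_form_along_line:
  "bilinear_form n H (\<lambda>k. x k + t * y k) (\<lambda>k. x k + t * y k) =
     bilinear_form n H x x + t * (bilinear_form n H x y + bilinear_form n H y x) +
     t ^ 2 * bilinear_form n H y y"
  unfolding bilinear_form_def
  by (simp add: algebra_simps sum.distrib sum_distrib_left power2_eq_square)

lemma bilinear_form_commute:
  "(\<And>a b. H a b = H b a) \<Longrightarrow> bilinear_form n H x y = bilinear_form n H y x"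
  unfolding bilinear_form_def by (subst sum.swap) (simp add: mult_ac)

lemma bilinear_form_eq_lin_form: "bilinear_form n H x y = lin_form n (mat_vec n H y) x"
  unfolding bilinear_form_def lin_form_def mat_vec_def by (simp add: sum_distrib_left mult_ac)

lemma lin_form_mat_vec_commute:
  "(\<And>a b. H a b = H b a) \<Longrightarrow> lin_form n (mat_vec n H y) x = lin_form n (mat_vec n H x) y"
  using bilinear_form_commute[of H n x y] by (simp add: bilinear_form_eq_lin_form)

lemma homogeneous_quadratic_form: "homogeneous_of_degree n 2 (\<lambda>v. bilinear_form n H v v / 2)"
proof -
  have "(\<lambda>v. bilinear_form n H v v / 2) \<in> polyfun n"
    unfolding bilinear_form_def
    by (intro polyfun_divide polyfun_sum polyfun.pf_mult polyfun.pf_const polyfun.pf_var) auto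
  then show ?thesis
    unfolding homogeneous_of_degree_def bilinear_form_def smul_def
    by (simp add: sum_distrib_left power2_eq_square mult_ac)
qed

lemma quadratic_form_along_isotropic:
  assumes "\<And>a b. H a b = H b a" and "bilinear_form n H e e = 0"
  shows "bilinear_form n H (\<lambda>m. v m + t * e m) (\<lambda>m. v m + t * e m) / 2 =
    bilinear_form n H v v / 2 + t * lin_form n (mat_vec n H e) v"
  using assms bilinear_form_commute[of H n v e]
  by (simp add: bilinear_form_along_line bilinear_form_eq_lin_form[of n H v e] field_simps)

lemma cspace_nonzero_coordinate:
  assumes "x \<in> cspace n" "x \<noteq> (\<lambda>i. 0)"
  obtains k where "k < n" "x k \<noteq> 0"
proof -
  obtain k where "x k \<noteq> 0"
    using assms(2) by auto
  moreover from this have "k < n"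
    using assms(1) unfolding cspace_def by (auto simp: not_less[symmetric])
  ultimately show ?thesis
    using that by blast
qed

lemma complex_quadratic_has_root:
  fixes a b c :: complex
  assumes "c \<noteq> 0"
  shows "\<exists>t. a + t * b + t ^ 2 * c = 0"
proof
  define w where "w = csqrt (b ^ 2 - 4 * a * c)"
  have "w ^ 2 = b ^ 2 - 4 * a * c"
    by (simp add: w_def)
  then show "a + ((w - b) / (2 * c)) * b + ((w - b) / (2 * c)) ^ 2 * c = 0"
    using assms by (simp add: field_simps power2_eq_square) algebra
qed

lemma mat_vec_nonzero_off_kernel:
  assumes kernel: "\<And>v. v \<in> cspace n \<Longrightarrow> \<forall>a<n. mat_vec n H v a = 0 \<Longrightarrow> \<exists>c. v = smul c p"
    and "p k \<noteq> 0" "v \<in> cspace n" "v k = 0" "v m \<noteq> 0"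
  shows "\<exists>a<n. mat_vec n H v a \<noteq> 0"
proof (rule ccontr)
  assume "\<not> ?thesis"
  then obtain c where "v = smul c p"
    using kernel[OF assms(3)] by auto
  with assms(2,4,5) show False
    by (auto simp: smul_def)
qed

text \<open>Coordinate vectors a, b at coordinates where p vanishes span a plane meeting the kernel only
  in 0; either b is isotropic or, solving a quadratic equation, some a + t b is.\<close>

lemma exists_isotropic_vector_off_kernel:
  assumes n: "3 \<le> n" and p: "p \<in> cspace n" "p \<noteq> (\<lambda>i. 0)"
    and kernel: "\<And>v. v \<in> cspace n \<Longrightarrow> \<forall>a<n. mat_vec n H v a = 0 \<Longrightarrow> \<exists>c. v = smul c p"
  obtains e where "e \<in> cspace n" "bilinear_form n H e e = 0" "\<exists>a<n. mat_vec n H e a \<noteq> 0"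
proof -
  obtain k where k: "k < n" "p k \<noteq> 0"
    using cspace_nonzero_coordinate[OF p] .
  define i :: nat where "i = (if k = 0 then 1 else 0)"
  define j :: nat where "j = (if k = 2 then 1 else 2)"
  have ij: "i < n" "j < n" "i \<noteq> k" "j \<noteq> k" "i \<noteq> j"
    using n unfolding i_def j_def by auto
  define a where "a = (\<lambda>m. if m = i then (1::complex) else 0)"
  define b where "b = (\<lambda>m. if m = j then (1::complex) else 0)"
  have ab: "a \<in> cspace n" "b \<in> cspace n"
    using ij unfolding a_def b_def cspace_def by auto
  show ?thesis
  proof (cases "bilinear_form n H b b = 0")
    case True
    then show ?thesis
      using that[OF ab(2)] mat_vec_nonzero_off_kernel[OF kernel k(2) ab(2), where m=j] ij
      by (auto simp: b_def)
  next
    case False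
    then obtain t where t: "bilinear_form n H a a + t * (bilinear_form n H a b + bilinear_form n H b a) +
        t ^ 2 * bilinear_form n H b b = 0"
      using complex_quadratic_has_root by blast
    define e where "e = (\<lambda>m. a m + t * b m)"
    have "e \<in> cspace n"
      using ab unfolding e_def cspace_def by auto
    moreover have "bilinear_form n H e e = 0"
      unfolding e_def bilinear_form_along_line using t .
    moreover have "\<exists>a<n. mat_vec n H e a \<noteq> 0"
      using mat_vec_nonzero_off_kernel[OF kernel k(2) \<open>e \<in> cspace n\<close>, where m=i] ij
      by (auto simp: e_def a_def b_def)
    ultimately show ?thesis
      using that by blast
  qed
qed

lemma ordinary_double_point_hessian:
  assumes F: "F \<in> polyfun (Suc n)" and odp: "ordinary_double_point n F p"
  shows "p \<in> cspace (Suc n)" "p \<noteq> (\<lambda>i. 0)" "F p = 0" "\<And>a. a < Suc n \<Longrightarrow> pdiff a F p = 0"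
    and "\<And>a b. hessian F p a b = hessian F p b a"
    and "\<And>a. a < Suc n \<Longrightarrow> mat_vec (Suc n) (hessian F p) p a = 0"
    and "\<And>v. v \<in> cspace (Suc n) \<Longrightarrow> \<forall>a<Suc n. mat_vec (Suc n) (hessian F p) v a = 0 \<Longrightarrow>
      \<exists>c. v = smul c p"
proof -
  have kernel: "{v \<in> cspace (Suc n). \<forall>a<Suc n. mat_vec (Suc n) (hessian F p) v a = 0} =
      {smul c p | c. True}"
    using odp unfolding ordinary_double_point_def mat_vec_def hessian_def lessThan_Suc_atMost less_Suc_eq_le
    by (elim conjE)
  show "p \<in> cspace (Suc n)" "p \<noteq> (\<lambda>i. 0)" "F p = 0" "\<And>a. a < Suc n \<Longrightarrow> pdiff a F p = 0"
    using odp unfolding ordinary_double_point_def proj_space_def by auto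
  show "\<And>a b. hessian F p a b = hessian F p b a"
    unfolding hessian_def using pdiff_commute[OF F] by metis
  have "p = smul 1 p"
    by (simp add: smul_def)
  then have "p \<in> {smul c p | c. True}"
    by blast
  then show "\<And>a. a < Suc n \<Longrightarrow> mat_vec (Suc n) (hessian F p) p a = 0"
    unfolding kernel[symmetric] by blast
  show "\<And>v. v \<in> cspace (Suc n) \<Longrightarrow> \<forall>a<Suc n. mat_vec (Suc n) (hessian F p) v a = 0 \<Longrightarrow>
      \<exists>c. v = smul c p"
    using kernel by blast
qed

lemma nonzero_minor_if_not_multiple:
  assumes p: "p \<in> cspace n" "p \<noteq> (\<lambda>i. 0)" and e: "e \<in> cspace n"
    and not_multiple: "\<And>c. e \<noteq> smul c p"
  obtains r s where "r < n" "s < n" "p r * e s - p s * e r \<noteq> 0"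
proof -
  obtain k where k: "k < n" "p k \<noteq> 0"
    using cspace_nonzero_coordinate[OF p] .
  have "\<exists>s<n. p k * e s - p s * e k \<noteq> 0"
  proof (rule ccontr)
    assume "\<not> ?thesis"
    then have "e m = e k / p k * p m" for m
      using k p(1) e unfolding cspace_def by (cases "m < n") (auto simp: field_simps)
    then have "e = smul (e k / p k) p"
      unfolding smul_def by blast
    with not_multiple show False
      by blast
  qed
  with k that show ?thesis
    by blast
qed

lemma nonzero_coefficient_off_minor:
  assumes "lin_form n c p = 0" "lin_form n c e = 0" "\<exists>m<n. c m \<noteq> 0"
    and rs: "r < n" "s < n" "p r * e s - p s * e r \<noteq> 0"
  obtains i where "i < n" "i \<noteq> r" "i \<noteq> s" "c i \<noteq> 0"
proof -
  have "r \<noteq> s"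
    using rs by auto
  have "\<exists>i<n. i \<noteq> r \<and> i \<noteq> s \<and> c i \<noteq> 0"
  proof (rule ccontr)
    assume none: "\<not> ?thesis"
    then have lin_form_rs: "lin_form n c x = c r * x r + c s * x s" for x
      unfolding lin_form_def using rs \<open>r \<noteq> s\<close>
      by (subst sum.mono_neutral_right[of "{..<n}" "{r, s}"]) auto
    have "c r * p r + c s * p s = 0" "c r * e r + c s * e s = 0"
      using assms(1,2) unfolding lin_form_rs by simp_all
    then have "c r * (p r * e s - p s * e r) = 0" "c s * (p r * e s - p s * e r) = 0"
      by algebra+
    with rs have "c r = 0" "c s = 0"
      by simp_all
    with none assms(3) show False
      by auto
  qed
  with that show ?thesis
    by blast
qed

lemma complete_to_five_indices:
  assumes "r < 5" "s < 5" "i < 5" "distinct [r, s, i]"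
  obtains j k :: nat where "distinct [r, s, i, j, k]" "{r, s, i, j, k} = {..<5}"
proof -
  have "card ({..<5::nat} - {r, s, i}) = 2"
    using assms by (subst card_Diff_subset) auto
  then obtain j k where jk: "{..<5::nat} - {r, s, i} = {j, k}" "j \<noteq> k"
    by (auto simp: card_2_iff)
  then have "j \<in> {..<5} - {r, s, i}" "k \<in> {..<5} - {r, s, i}"
    by auto
  with assms jk(2) have "distinct [r, s, i, j, k]"
    by auto
  moreover have "{r, s, i, j, k} = {r, s, i} \<union> ({..<5} - {r, s, i})"
    using jk(1) by auto
  with assms have "{r, s, i, j, k} = {..<5}"
    by auto
  ultimately show ?thesis
    using that by blast
qed

lemma chart_indices_exist:
  assumes p: "p \<in> cspace 5" "p \<noteq> (\<lambda>i. 0)" and e: "e \<in> cspace 5" "\<And>a. e \<noteq> smul a p"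
    and c: "lin_form 5 c p = 0" "lin_form 5 c e = 0" "\<exists>m<5. c m \<noteq> 0"
  obtains r s i j k where "distinct [r, s, i, j, k]" "{r, s, i, j, k} = {..<5}"
    "p r * e s - p s * e r \<noteq> 0" "c i \<noteq> 0"
proof -
  obtain r s where rs: "r < 5" "s < 5" "p r * e s - p s * e r \<noteq> 0"
    using nonzero_minor_if_not_multiple[OF p e] by blast
  obtain i where i: "i < 5" "i \<noteq> r" "i \<noteq> s" "c i \<noteq> 0"
    using nonzero_coefficient_off_minor[OF c rs] .
  have "r \<noteq> s"
    using rs(3) by auto
  with rs i obtain j k where "distinct [r, s, i, j, k]" "{r, s, i, j, k} = {..<5}"
    using complete_to_five_indices[of r s i] by auto
  with that rs(3) i(4) show ?thesis
    by blast
qed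

section \<open>Zariski-open sets, varieties and morphisms\<close>

lemma proj_open_nonvanishing:
  assumes "homogeneous_of_degree (Suc n) d g"
  shows "proj_open n {x \<in> proj_space n. g x \<noteq> 0}"
proof -
  have "proj_space n - {x \<in> proj_space n. g x \<noteq> 0} = {x \<in> proj_space n. \<forall>g'\<in>{g}. g' x = 0}"
    by auto
  with assms show ?thesis
    unfolding proj_open_def proj_closed_def by (intro conjI exI[of _ "{g}"]) auto
qed

lemma regular_on_proj_quotient:
  assumes "homogeneous_of_degree (Suc n) d a" "homogeneous_of_degree (Suc n) d b" "proj_open n U"
    and "\<And>y. y \<in> U \<Longrightarrow> b y \<noteq> 0 \<and> f y = a y / b y"
  shows "regular_on_proj n U f"
  unfolding regular_on_proj_def
  by (intro ballI exI[of _ a] exI[of _ b] exI[of _ d] exI[of _ U]) (use assms in auto)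

lemma aff_open_nonvanishing:
  assumes "h \<in> polyfun m"
  shows "aff_open m {y \<in> cspace m. h y \<noteq> 0}"
proof -
  have "cspace m - {y \<in> cspace m. h y \<noteq> 0} = {y \<in> cspace m. \<forall>g\<in>{h}. g y = 0}"
    by auto
  with assms show ?thesis
    unfolding aff_open_def aff_closed_def by (intro conjI exI[of _ "{h}"]) auto
qed

lemma polyfun_along_segment:
  assumes "f \<in> polyfun m" "f z1 \<noteq> 0 \<or> f z2 \<noteq> 0"
  obtains P where "P \<noteq> 0" "\<And>t. f (\<lambda>k. z1 k + t * (z2 k - z1 k)) = poly P t"
proof -
  obtain P where P: "\<And>t. f (\<lambda>k. z1 k + t * (z2 k - z1 k)) = poly P t"
    using polyfun_along_line[OF assms(1), of z1 "\<lambda>k. z2 k - z1 k"] by blast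
  have "P \<noteq> 0"
  proof
    assume "P = 0"
    with P[of 0] P[of 1] have "f z1 = 0" "f z2 = 0"
      by simp_all
    with assms(2) show False
      by simp
  qed
  with P that show ?thesis
    by blast
qed

text \<open>Two points of a principal open set lie on an affine line, on which a polynomial not vanishing
  at one of them has only finitely many zeros.\<close>

lemma principal_open_irreducible:
  assumes h: "h \<in> polyfun m" and Z: "Z = {y \<in> cspace m. h y \<noteq> 0}"
    and C: "aff_closed m C1" "aff_closed m C2" and cover: "Z \<subseteq> C1 \<union> C2"
  shows "Z \<subseteq> C1 \<or> Z \<subseteq> C2"
proof (rule ccontr)
  assume "\<not> (Z \<subseteq> C1 \<or> Z \<subseteq> C2)"
  then obtain z1 z2 where z1: "z1 \<in> Z" "z1 \<notin> C1" and z2: "z2 \<in> Z" "z2 \<notin> C2"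
    by blast
  then have z12: "z1 \<in> cspace m" "z2 \<in> cspace m" "h z1 \<noteq> 0"
    unfolding Z by simp_all
  obtain G1 where G1: "G1 \<subseteq> polyfun m" "C1 = {x \<in> cspace m. \<forall>g\<in>G1. g x = 0}"
    using C(1) unfolding aff_closed_def by blast
  obtain G2 where G2: "G2 \<subseteq> polyfun m" "C2 = {x \<in> cspace m. \<forall>g\<in>G2. g x = 0}"
    using C(2) unfolding aff_closed_def by blast
  obtain g1 where g1: "g1 \<in> G1" "g1 z1 \<noteq> 0"
    using z1(2) z12(1) unfolding G1(2) by blast
  obtain g2 where g2: "g2 \<in> G2" "g2 z2 \<noteq> 0"
    using z2(2) z12(2) unfolding G2(2) by blast
  define line where "line t = (\<lambda>k. z1 k + t * (z2 k - z1 k))" for t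
  obtain P1 where P1: "P1 \<noteq> 0" "\<And>t. g1 (line t) = poly P1 t"
    using polyfun_along_segment[OF subsetD[OF G1(1) g1(1)]] g1(2) unfolding line_def by blast
  obtain P2 where P2: "P2 \<noteq> 0" "\<And>t. g2 (line t) = poly P2 t"
    using polyfun_along_segment[OF subsetD[OF G2(1) g2(1)]] g2(2) unfolding line_def by blast
  obtain P3 where P3: "P3 \<noteq> 0" "\<And>t. h (line t) = poly P3 t"
    using polyfun_along_segment[OF h] z12(3) unfolding line_def by blast
  have "finite {t. poly (P1 * P2 * P3) t = 0}"
    using P1 P2 P3 by (intro poly_roots_finite) simp
  then obtain t where t: "poly (P1 * P2 * P3) t \<noteq> 0"
    using ex_new_if_finite[OF infinite_UNIV_char_0] by blast
  have "h (line t) \<noteq> 0" "g1 (line t) \<noteq> 0" "g2 (line t) \<noteq> 0"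
    using t P1 P2 P3 by auto
  moreover have "line t \<in> cspace m"
    using z12 unfolding line_def cspace_def by simp
  ultimately have "line t \<in> Z" "line t \<notin> C1" "line t \<notin> C2"
    using g1(1) g2(1) unfolding Z G1(2) G2(2) by blast+
  with cover show False
    by blast
qed

lemma quasi_affine_variety_nonvanishing:
  assumes "h \<in> polyfun m" "\<exists>y\<in>cspace m. h y \<noteq> 0"
  shows "quasi_affine_variety m {y \<in> cspace m. h y \<noteq> 0}"
proof -
  have "aff_closed m (cspace m)"
    unfolding aff_closed_def by (intro exI[of _ "{}"]) auto
  then have "\<exists>A V. aff_closed m A \<and> aff_open m V \<and> {y \<in> cspace m. h y \<noteq> 0} = A \<inter> V"
    using aff_open_nonvanishing[OF assms(1)] by blast
  with assms(2) principal_open_irreducible[OF assms(1) refl] show ?thesis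
    unfolding quasi_affine_variety_def by blast
qed

lemma morphism_aff_to_projI:
  assumes C: "C \<subseteq> cspace m" and h: "\<And>i. i \<le> n \<Longrightarrow> h i \<in> polyfun m"
    and \<psi>: "\<And>y. y \<in> C \<Longrightarrow> \<psi> y \<in> proj_space n \<and> d y \<noteq> 0 \<and> (\<forall>i\<le>n. h i y = d y * \<psi> y i)"
  shows "morphism_aff_to_proj m C n \<psi>"
proof -
  have "aff_open m (cspace m)"
    unfolding aff_open_def aff_closed_def by (auto intro!: exI[of _ "{\<lambda>y. 1}"] polyfun.pf_const)
  moreover have "(\<exists>i\<le>n. h i y \<noteq> 0) \<and> (\<exists>c. c \<noteq> 0 \<and> \<psi> y = smul c (\<lambda>i. if i \<le> n then h i y else 0))"
    if "y \<in> C" for y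
  proof -
    have y: "\<psi> y \<in> cspace (Suc n)" "\<psi> y \<noteq> (\<lambda>i. 0)" "d y \<noteq> 0" "\<forall>i\<le>n. h i y = d y * \<psi> y i"
      using \<psi>[OF that] unfolding proj_space_def by auto
    obtain i where "i < Suc n" "\<psi> y i \<noteq> 0"
      using cspace_nonzero_coordinate[OF y(1,2)] .
    with y have "\<exists>i\<le>n. h i y \<noteq> 0"
      by auto
    moreover have "\<psi> y = smul (1 / d y) (\<lambda>i. if i \<le> n then h i y else 0)"
      using y unfolding smul_def cspace_def by (auto simp: fun_eq_iff not_le)
    ultimately show ?thesis
      using y(3) by (intro conjI exI[of _ "1 / d y"]) auto
  qed
  ultimately show ?thesis
    unfolding morphism_aff_to_proj_def using C h
    by (intro ballI exI[of _ "cspace m"] exI[of _ h]) auto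
qed

section \<open>The cylinder chart\<close>

text \<open>The indices r, s are coordinates in which p and e are independent and are used to project
  along the plane they span; i is a coordinate where ell has a nonzero coefficient and is used to
  solve ell = 1 on the projection; j and k are the two remaining, free, coordinates.\<close>

locale cylinder_chart =
  fixes F Q :: "(nat \<Rightarrow> complex) \<Rightarrow> complex" and p e c :: "nat \<Rightarrow> complex" and r s i j k :: nat
  assumes F_hom: "homogeneous_of_degree 5 3 F"
    and Q_hom: "homogeneous_of_degree 5 2 Q"
    and F_along_p: "\<And>v t. F (\<lambda>m. v m + t * p m) = t * Q v + F v"
    and Q_along_e: "\<And>v t. Q (\<lambda>m. v m + t * e m) = Q v + t * lin_form 5 c v"
    and p: "p \<in> cspace 5" and e: "e \<in> cspace 5"
    and lin_form_p: "lin_form 5 c p = 0" and lin_form_e: "lin_form 5 c e = 0"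
    and distinct_indices: "distinct [r, s, i, j, k]" and all_indices: "{r, s, i, j, k} = {..<5}"
    and minor: "p r * e s - p s * e r \<noteq> 0"
    and c_i: "c i \<noteq> 0"
begin

lemma indices_less: "r < 5" "s < 5" "i < 5" "j < 5" "k < 5"
  unfolding atMost_iff lessThan_iff[symmetric] all_indices[symmetric] by simp_all

abbreviation ell :: "(nat \<Rightarrow> complex) \<Rightarrow> complex"
  where "ell \<equiv> lin_form 5 c"

lemma ell_expand: "ell v = c r * v r + c s * v s + c i * v i + c j * v j + c k * v k"
  unfolding lin_form_def all_indices[symmetric] using distinct_indices by simp

lemma Q_along_p: "Q (\<lambda>m. v m + t * p m) = Q v"
proof -
  have "(\<lambda>m. v m + (t + 1) * p m) = (\<lambda>m. (v m + t * p m) + 1 * p m)"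
    by (simp add: algebra_simps)
  then have "(t + 1) * Q v + F v = Q (\<lambda>m. v m + t * p m) + F (\<lambda>m. v m + t * p m)"
    using F_along_p by (metis mult_1)
  then show ?thesis
    using F_along_p[of v t] by (simp add: algebra_simps)
qed

definition p_coord :: "(nat \<Rightarrow> complex) \<Rightarrow> complex"
  where "p_coord x = (x r * e s - x s * e r) / (p r * e s - p s * e r)"

definition e_coord :: "(nat \<Rightarrow> complex) \<Rightarrow> complex"
  where "e_coord x = (p r * x s - p s * x r) / (p r * e s - p s * e r)"

definition residual :: "(nat \<Rightarrow> complex) \<Rightarrow> nat \<Rightarrow> complex"
  where "residual x = (\<lambda>m. x m - p_coord x * p m - e_coord x * e m)"

lemma residual_r: "residual x r = 0" and residual_s: "residual x s = 0"
  unfolding residual_def p_coord_def e_coord_def using minor by (simp_all add: field_simps)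

lemma residual_eq_self: "v r = 0 \<Longrightarrow> v s = 0 \<Longrightarrow> residual v = v"
  unfolding residual_def p_coord_def e_coord_def by simp

lemma residual_add_span: "residual (\<lambda>m. v m + a * e m + b * p m) = residual v"
proof -
  have "p_coord (\<lambda>m. v m + a * e m + b * p m) = p_coord v + b"
    "e_coord (\<lambda>m. v m + a * e m + b * p m) = e_coord v + a"
    unfolding p_coord_def e_coord_def using minor by (simp_all add: field_simps)
  then show ?thesis
    unfolding residual_def by (simp add: algebra_simps)
qed

lemma decompose: "x = (\<lambda>m. (residual x m + e_coord x * e m) + p_coord x * p m)"
  unfolding residual_def by simp

lemma residual_smul: "residual (smul a x) = smul a (residual x)"
  unfolding residual_def p_coord_def e_coord_def smul_def by (simp add: fun_eq_iff field_simps)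

lemma residual_cspace: "x \<in> cspace 5 \<Longrightarrow> residual x \<in> cspace 5"
  using p e unfolding residual_def cspace_def by simp

lemma ell_residual: "ell (residual x) = ell x"
proof -
  have "ell (residual x) = ell x - p_coord x * ell p - e_coord x * ell e"
    unfolding residual_def lin_form_def by (simp add: algebra_simps sum_subtractf sum_distrib_left sum.distrib)
  then show ?thesis
    using lin_form_p lin_form_e by simp
qed

lemma Q_decompose: "Q x = Q (residual x) + e_coord x * ell x"
proof -
  have "Q x = Q (\<lambda>m. residual x m + e_coord x * e m)"
    by (subst decompose) (rule Q_along_p)
  then show ?thesis
    by (simp add: Q_along_e ell_residual)
qed

lemma F_decompose: "F x = p_coord x * Q x + F (\<lambda>m. residual x m + e_coord x * e m)"
proof -
  have "Q x = Q (\<lambda>m. residual x m + e_coord x * e m)"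
    by (subst decompose) (rule Q_along_p)
  moreover have "F x = p_coord x * Q (\<lambda>m. residual x m + e_coord x * e m) +
      F (\<lambda>m. residual x m + e_coord x * e m)"
    by (subst decompose) (rule F_along_p)
  ultimately show ?thesis
    by simp
qed

lemma eq_if_same_free_coordinates:
  assumes "v \<in> cspace 5" "w \<in> cspace 5" "v r = 0" "v s = 0" "w r = 0" "w s = 0"
    and "v j = w j" "v k = w k" "ell v = ell w"
  shows "v = w"
proof
  fix m
  have "v i = w i"
    using assms(3-9) c_i unfolding ell_expand by simp
  moreover have "m \<in> {r, s, i, j, k} \<or> 5 \<le> m"
    using all_indices by (metis lessThan_iff not_le)
  ultimately show "v m = w m"
    using assms(1-8) unfolding cspace_def by auto
qed

definition U :: "(nat \<Rightarrow> complex) set"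
  where "U = {x \<in> proj_space 4. ell x \<noteq> 0 \<and> Q x \<noteq> 0 \<and> F x \<noteq> 0}"

definition base :: "(nat \<Rightarrow> complex) set"
  where "base = {y \<in> cspace 3. y 0 * y 1 \<noteq> 0}"

definition chart :: "(nat \<Rightarrow> complex) \<Rightarrow> nat \<Rightarrow> complex"
  where "chart x = (\<lambda>m. if m = 0 then Q x / ell x ^ 2 else if m = 1 then F x / ell x ^ 3
    else if m = 2 then residual x j / ell x else if m = 3 then residual x k / ell x else 0)"

definition section_point :: "(nat \<Rightarrow> complex) \<Rightarrow> nat \<Rightarrow> complex"
  where "section_point y = (\<lambda>m. if m = j then y 2 else if m = k then y 3
    else if m = i then (1 - c j * y 2 - c k * y 3) / c i else 0)"

definition lift :: "(nat \<Rightarrow> complex) \<Rightarrow> nat \<Rightarrow> complex"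
  where "lift y = (\<lambda>m. section_point y m + (y 0 - Q (section_point y)) * e m)"

definition inv_chart :: "(nat \<Rightarrow> complex) \<Rightarrow> nat \<Rightarrow> complex"
  where "inv_chart y = (\<lambda>m. lift y m + (y 1 - F (lift y)) / y 0 * p m)"

lemma cylinder_over_base: "cylinder_over 3 base = {y \<in> cspace 4. y 0 * y 1 \<noteq> 0}"
proof (intro set_eqI iffI)
  fix y
  assume "y \<in> cylinder_over 3 base"
  then show "y \<in> {y \<in> cspace 4. y 0 * y 1 \<noteq> 0}"
    unfolding cylinder_over_def base_def cspace_def by auto
next
  fix y
  assume y: "y \<in> {y \<in> cspace 4. y 0 * y 1 \<noteq> 0}"
  then have "y(3 := 0) \<in> base"
    unfolding base_def cspace_def by auto
  moreover have "y = (y(3 := 0))(3 := y 3)"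
    by simp
  ultimately show "y \<in> cylinder_over 3 base"
    unfolding cylinder_over_def by blast
qed

lemma section_point_cspace: "section_point y \<in> cspace 5"
  using indices_less unfolding section_point_def cspace_def by auto

lemma section_point_r: "section_point y r = 0" and section_point_s: "section_point y s = 0"
  using distinct_indices unfolding section_point_def by auto

lemma section_point_free: "section_point y j = y 2" "section_point y k = y 3"
    "section_point y i = (1 - c j * y 2 - c k * y 3) / c i"
  using distinct_indices unfolding section_point_def by auto

lemma ell_section_point: "ell (section_point y) = 1"
  using c_i unfolding ell_expand section_point_r section_point_s section_point_free
  by (simp add: field_simps)

lemma lift_cspace: "lift y \<in> cspace 5"
  using section_point_cspace e unfolding lift_def cspace_def by simp

lemma ell_lift: "ell (lift y) = 1" and Q_lift: "Q (lift y) = y 0"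
  unfolding lift_def by (simp_all add: lin_form_add_scaled ell_section_point lin_form_e Q_along_e)

lemma inv_chart_cspace: "inv_chart y \<in> cspace 5"
  using lift_cspace p unfolding inv_chart_def cspace_def by simp

lemma ell_inv_chart: "ell (inv_chart y) = 1"
  unfolding inv_chart_def lin_form_add_scaled ell_lift lin_form_p by simp

lemma Q_inv_chart: "Q (inv_chart y) = y 0"
  unfolding inv_chart_def Q_along_p by (rule Q_lift)

lemma F_inv_chart: "y 0 \<noteq> 0 \<Longrightarrow> F (inv_chart y) = y 1"
  unfolding inv_chart_def F_along_p Q_lift by simp

lemma residual_inv_chart: "residual (inv_chart y) = section_point y"
proof -
  have "residual (inv_chart y) = residual (section_point y)"
    unfolding inv_chart_def lift_def by (rule residual_add_span)
  then show ?thesis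
    using residual_eq_self section_point_r section_point_s by simp
qed

lemma chart_inv_chart:
  assumes "y \<in> cylinder_over 3 base"
  shows "chart (inv_chart y) = y"
proof
  fix m :: nat
  have y: "y \<in> cspace 4" "y 0 \<noteq> 0"
    using assms unfolding cylinder_over_base by auto
  have "m = 0 \<or> m = 1 \<or> m = 2 \<or> m = 3 \<or> 4 \<le> m"
    by linarith
  then show "chart (inv_chart y) m = y m"
    using y distinct_indices
    by (auto simp: chart_def ell_inv_chart Q_inv_chart F_inv_chart residual_inv_chart
        section_point_def cspace_def)
qed

lemma chart_smul:
  assumes "a \<noteq> 0"
  shows "chart (smul a x) = chart x"
proof -
  have "Q (smul a x) = a ^ 2 * Q x" "F (smul a x) = a ^ 3 * F x"
    using Q_hom F_hom by (simp_all add: homogeneous_of_degree_def)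
  moreover have "residual (smul a x) m = a * residual x m" for m
    unfolding residual_smul by (simp add: smul_def)
  ultimately show ?thesis
    using assms by (simp add: chart_def fun_eq_iff lin_form_smul power_mult_distrib)
qed

lemma chart_inj:
  assumes "x \<in> cspace 5" "x' \<in> cspace 5" "ell x = 1" "ell x' = 1" "Q x \<noteq> 0"
    and "chart x = chart x'"
  shows "x = x'"
proof -
  have "chart x' m = chart x m" for m
    using assms(6) by simp
  from this[of 0] this[of 1] this[of 2] this[of 3] assms(3,4)
  have Q: "Q x' = Q x" and F: "F x' = F x"
    and jk: "residual x' j = residual x j" "residual x' k = residual x k"
    by (simp_all add: chart_def)
  have res: "residual x' = residual x"
    using assms(1-4) jk
    by (intro eq_if_same_free_coordinates residual_cspace) (simp_all add: residual_r residual_s ell_residual)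
  have e_coord: "e_coord x' = e_coord x"
    using Q_decompose[of x] Q_decompose[of x'] assms(3,4) Q res by simp
  have "p_coord x' * Q x = p_coord x * Q x"
    using F_decompose[of x] F_decompose[of x'] Q F res e_coord by force
  then have "p_coord x' = p_coord x"
    using assms(5) by simp
  then show ?thesis
    using decompose[of x] decompose[of x'] res e_coord by metis
qed

lemma U_subset: "U \<subseteq> proj_space 4 - {x. F x = 0}"
  unfolding U_def by auto

lemma U_open: "proj_open 4 U"
proof -
  have "homogeneous_of_degree 5 (1 + 2 + 3) (\<lambda>x. ell x * Q x * F x)"
    by (intro homogeneous_of_degree_mult homogeneous_lin_form Q_hom F_hom)
  from proj_open_nonvanishing[of 4, simplified, OF this[simplified]] show ?thesis
    unfolding U_def by simp
qed

lemma chart_in_cylinder: "x \<in> U \<Longrightarrow> chart x \<in> cylinder_over 3 base"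
  unfolding U_def cylinder_over_base by (simp add: chart_def cspace_def)

lemma inv_chart_in_U:
  assumes "y \<in> cylinder_over 3 base"
  shows "inv_chart y \<in> U"
proof -
  have y: "y 0 \<noteq> 0" "y 1 \<noteq> 0"
    using assms unfolding cylinder_over_base by auto
  have "inv_chart y \<noteq> (\<lambda>m. 0)"
  proof
    assume "inv_chart y = (\<lambda>m. 0)"
    then have "ell (inv_chart y) = 0"
      by (simp add: lin_form_def)
    with ell_inv_chart show False
      by simp
  qed
  with y show ?thesis
    unfolding U_def proj_space_def
    using inv_chart_cspace ell_inv_chart Q_inv_chart F_inv_chart by simp
qed

lemma inv_chart_chart:
  assumes "x \<in> U"
  shows "inv_chart (chart x) = smul (1 / ell x) x"
proof (rule chart_inj)
  have x: "x \<in> cspace 5" "ell x \<noteq> 0" "Q x \<noteq> 0"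
    using assms unfolding U_def proj_space_def by auto
  show "inv_chart (chart x) \<in> cspace 5" "smul (1 / ell x) x \<in> cspace 5"
    using inv_chart_cspace x(1) by (auto simp: cspace_def smul_def)
  show "ell (inv_chart (chart x)) = 1" "ell (smul (1 / ell x) x) = 1"
    using ell_inv_chart x(2) by (simp_all add: lin_form_smul)
  show "Q (inv_chart (chart x)) \<noteq> 0"
    using Q_inv_chart x by (simp add: chart_def)
  show "chart (inv_chart (chart x)) = chart (smul (1 / ell x) x)"
    using chart_inv_chart[OF chart_in_cylinder[OF assms]] chart_smul x(2) by simp
qed

lemma residual_homogeneous:
  assumes "m < 5"
  shows "homogeneous_of_degree 5 1 (\<lambda>x. residual x m)"
proof -
  have "(\<lambda>x. residual x m) \<in> polyfun 5"
    unfolding residual_def p_coord_def e_coord_def using assms indices_less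
    by (intro polyfun_diff polyfun.pf_mult polyfun_divide polyfun.pf_var polyfun.pf_const) auto
  then show ?thesis
    unfolding homogeneous_of_degree_def residual_smul by (simp add: smul_def)
qed

lemma chart_morphism: "morphism_proj_to_aff 4 U 4 chart"
  unfolding morphism_proj_to_aff_def
proof (intro conjI ballI allI impI)
  show "chart x \<in> cspace 4" if "x \<in> U" for x
    by (simp add: chart_def cspace_def)
  have ell: "ell x \<noteq> 0" if "x \<in> U" for x
    using that unfolding U_def by simp
  have ell_power: "homogeneous_of_degree 5 (1 * d) (\<lambda>x. ell x ^ d)" for d
    by (rule homogeneous_of_degree_power[OF homogeneous_lin_form])
  fix m :: nat
  assume "m < 4"
  then consider "m = 0" | "m = 1" | "m = 2" | "m = 3"
    by linarith
  then show "regular_on_proj 4 U (\<lambda>x. chart x m)"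
  proof cases
    case 1
    show ?thesis
      by (rule regular_on_proj_quotient[of 4, simplified, OF Q_hom ell_power[of 2, simplified] U_open])
        (use ell 1 in \<open>simp add: chart_def\<close>)
  next
    case 2
    show ?thesis
      by (rule regular_on_proj_quotient[of 4, simplified, OF F_hom ell_power[of 3, simplified] U_open])
        (use ell 2 in \<open>simp add: chart_def\<close>)
  next
    case 3
    show ?thesis
      by (rule regular_on_proj_quotient[of 4, simplified, OF residual_homogeneous[OF indices_less(4)]
          homogeneous_lin_form[of 5 c] U_open])
        (use ell 3 in \<open>simp add: chart_def\<close>)
  next
    case 4
    show ?thesis
      by (rule regular_on_proj_quotient[of 4, simplified, OF residual_homogeneous[OF indices_less(5)]
          homogeneous_lin_form[of 5 c] U_open])
        (use ell 4 in \<open>simp add: chart_def\<close>)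
  qed
qed

lemma inv_chart_morphism: "morphism_aff_to_proj 4 (cylinder_over 3 base) 4 inv_chart"
proof (rule morphism_aff_to_projI)
  show "cylinder_over 3 base \<subseteq> cspace 4"
    unfolding cylinder_over_base by blast
  have section_point: "(\<lambda>y. section_point y m) \<in> polyfun 4" for m
    unfolding section_point_def
    by (cases "m = j"; cases "m = k"; cases "m = i") (auto intro!: polyfun.intros polyfun_divide polyfun_diff)
  have lift: "(\<lambda>y. lift y m) \<in> polyfun 4" for m
    unfolding lift_def
    by (intro polyfun.intros polyfun_diff section_point polyfun_compose[OF homogeneous_of_degree_polyfun[OF Q_hom]]) auto
  show "(\<lambda>y. y 0 * lift y m + (y 1 - F (lift y)) * p m) \<in> polyfun 4" for m
    by (intro polyfun.intros polyfun_diff lift polyfun_compose[OF homogeneous_of_degree_polyfun[OF F_hom]]) auto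
  show "inv_chart y \<in> proj_space 4 \<and> y 0 \<noteq> 0 \<and>
      (\<forall>m\<le>4. y 0 * lift y m + (y 1 - F (lift y)) * p m = y 0 * inv_chart y m)"
    if "y \<in> cylinder_over 3 base" for y
    using inv_chart_in_U[OF that] that unfolding U_def cylinder_over_base
    by (auto simp: inv_chart_def field_simps)
qed

lemma base_quasi_affine: "quasi_affine_variety 3 base"
proof -
  have "(\<lambda>y. y 0 * y 1) \<in> polyfun 3"
    by (intro polyfun.intros) auto
  moreover have "\<exists>y\<in>cspace 3. y 0 * y 1 \<noteq> 0"
    by (intro bexI[of _ "\<lambda>m. if m < 2 then 1 else 0"]) (auto simp: cspace_def)
  ultimately show ?thesis
    unfolding base_def by (rule quasi_affine_variety_nonvanishing)
qed

theorem contains_cylinder: "contains_cylinder 4 (proj_space 4 - {x. F x = 0})"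
proof -
  have "proj_eq x (inv_chart (chart x))" if "x \<in> U" for x
  proof -
    have "ell x \<noteq> 0"
      using that unfolding U_def by simp
    then show ?thesis
      unfolding proj_eq_def inv_chart_chart[OF that] by (intro exI[of _ "1 / ell x"]) simp
  qed
  then show ?thesis
    unfolding contains_cylinder_def
    using U_open U_subset base_quasi_affine chart_morphism inv_chart_morphism chart_in_cylinder
      inv_chart_in_U chart_inv_chart
    by (intro exI[of _ U] exI[of _ 3] exI[of _ base] exI[of _ chart] exI[of _ inv_chart]) simp
qed

end

lemma cylinder_chart_exists:
  assumes cubic: "homogeneous_of_degree 5 3 F" and odp: "ordinary_double_point 4 F p"
  shows "\<exists>Q e c r s i j k. cylinder_chart F Q p e c r s i j k"
proof -
  note odp = ordinary_double_point_hessian[of F 4, unfolded Suc_numeral semiring_norm,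
      OF homogeneous_of_degree_polyfun[OF cubic] odp]
  define H where "H = hessian F p"
  obtain e where e: "e \<in> cspace 5" "bilinear_form 5 H e e = 0" "\<exists>a<5. mat_vec 5 H e a \<noteq> 0"
    using exists_isotropic_vector_off_kernel[of 5 p H] odp unfolding H_def by auto
  define c where "c = mat_vec 5 H e"
  have "lin_form 5 c p = lin_form 5 (mat_vec 5 H p) e"
    unfolding c_def H_def by (rule lin_form_mat_vec_commute) (rule odp(5))
  also have "\<dots> = 0"
    using odp(6) by (simp add: lin_form_def H_def)
  finally have lin_form_p: "lin_form 5 c p = 0" .
  have lin_form_e: "lin_form 5 c e = 0"
    using e(2) by (simp add: c_def bilinear_form_eq_lin_form)
  have "e \<noteq> smul a p" for a
    using e(3) odp(6) by (auto simp: mat_vec_smul H_def)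
  then obtain r s i j k where indices: "distinct [r, s, i, j, k]" "{r, s, i, j, k} = {..<5}"
    "p r * e s - p s * e r \<noteq> 0" "c i \<noteq> 0"
    using chart_indices_exist[OF odp(1,2) e(1) _ lin_form_p lin_form_e] e(3) unfolding c_def by blast
  have "cylinder_chart F (\<lambda>v. bilinear_form 5 H v v / 2) p e c r s i j k"
  proof
    show "F (\<lambda>m. v m + t * p m) = t * (bilinear_form 5 H v v / 2) + F v" for v t
      using cubic_expansion_at_singular_point[OF cubic] odp(3,4) unfolding H_def by blast
    show "bilinear_form 5 H (\<lambda>m. v m + t * e m) (\<lambda>m. v m + t * e m) / 2 =
        bilinear_form 5 H v v / 2 + t * lin_form 5 c v" for v t
      unfolding c_def using quadratic_form_along_isotropic odp(5) e(2) unfolding H_def by blast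
  qed (use cubic homogeneous_quadratic_form odp(1) e(1) lin_form_p lin_form_e indices in auto)
  then show ?thesis
    by blast
qed

theorem proposition5p2:
  fixes F :: "(nat \<Rightarrow> complex) \<Rightarrow> complex" and p :: "nat \<Rightarrow> complex"
  assumes cubic: "homogeneous_of_degree 5 3 F"
    and nonzero: "\<exists>x. F x \<noteq> 0"
    and singular: "\<exists>q\<in>proj_space 4. F q = 0 \<and> (\<forall>i\<le>4. pdiff i F q = 0)"
    and odp: "ordinary_double_point 4 F p"
  shows "contains_cylinder 4 (proj_space 4 - {x. F x = 0})"
proof -
  obtain Q e c r s i j k where "cylinder_chart F Q p e c r s i j k"
    using cylinder_chart_exists[OF cubic odp] by blast
  then show ?thesis
    by (rule cylinder_chart.contains_cylinder)
qed

end
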